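(* Turing machines and extended Turing machines can be converted into each other with only polynomial increase in machine size and while preserving polynomial runtimes. Precisely: for every Turing machine $\mathcal{T}$ there is an extended Turing machine $\mathcal{E}$, of size polynomial in the size of $\mathcal{T}$, that halts on exactly the same input tapes as $\mathcal{T}$ and such that if $\mathcal{T}$ halts within a number of steps polynomial in the input length then so does $\mathcal{E}$; and conversely, for every extended Turing machine $\mathcal{E}$ there is a Turing machine $\mathcal{T}$ with the same properties relative to $\mathcal{E}$.
   Context: A Turing machine is a tuple $(Q, q_I, q_H, \Sigma, \delta)$ with finite state set $Q$, initial state $q_I$, halt state $q_H$, finite alphabet $\Sigma$, and transition function $\delta: Q\times \Sigma_\bot \to Q \times \Sigma \times \{L,S,R\}$ (where $\Sigma_\bot = \Sigma\cup\{\bot\}$, $\bot$ a blank), with $\delta(q_H,a)=(q_H,a,S)$ for all $a\in\Sigma$ and $\delta(q_H,\bot)=(q_H,a,S)$ for some $a\in\Sigma$. Configurations are tuples $(q,\alpha,b,\gamma)$ with $q\in Q$, $\alpha,\gamma\in\Sigma^*$, $b\in\Sigma_\bot$. Steps: $(q,\alpha a,b,\gamma)\to(q',\alpha,a,b'\gamma)$ if $\delta(q,b)=(q',b',L)$; $(q,\alpha,b,\gamma)\to(q',\alpha,b',\gamma)$ if $\delta(q,b)=(q',b',S)$; $(q,\alpha,b,c\gamma)\to(q',\alpha b',c,\gamma)$ if $\delta(q,b)=(q',b',R)$; and at tape ends $(q,\epsilon,b,\gamma)\to(q',\epsilon,\bot,b'\gamma)$ for $\delta(q,b)=(q',b',L)$,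 $(q,\alpha,b,\epsilon)\to(q',\alpha b',\bot,\epsilon)$ for $\delta(q,b)=(q',b',R)$. A run on input $\alpha_I$ starts at $(q_I,\epsilon,\bot,\alpha_I)$; the machine halts on $\alpha_I$ if the run reaches state $q_H$. An extended Turing machine is defined identically except that $\delta: Q\times\Sigma_\bot\to Q\times\Sigma^*\times\{L,S,R\}$, with the requirement that if $\delta(q,b)=(q',\beta,d)$ then $d=S$ only if $|\beta|=1$; its steps are $(q,\alpha a,b,\gamma)\to(q',\alpha,a,\beta\gamma)$ for $\delta(q,b)=(q',\beta,L)$, $(q,\alpha,b,\gamma)\to(q',\alpha,b',\gamma)$ for $\delta(q,b)=(q',b',S)$, $(q,\alpha,b,c\gamma)\to(q',\alpha\beta,c,\gamma)$ for $\delta(q,b)=(q',\beta,R)$, and at tape ends $(q,\epsilon,b,\gamma)\to(q',\epsilon,\bot,\beta\gamma)$ for $\delta(q,b)=(q',\beta,L)$, $(q,\alpha,b,\epsilon)\to(q',\alpha\beta,\bot,\epsilon)$ for $\delta(q,b)=(q',\beta,R)$; the halting conventions and runs are as for Turing machines (so extended machines may insert several symbols in one step). *)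

theory Defs
  imports Main "HOL-Computational_Algebra.Polynomial"
begin

datatype dir = L | S | R

text \<open>The blank is represented by None, a tape symbol a by Some a.
  The transition function writes a list of symbols; an ordinary Turing machine
  is one that always writes exactly one symbol.\<close>
record machine =
  states :: "nat set"
  init   :: nat
  halt   :: nat
  alph   :: "nat set"
  delta  :: "nat \<Rightarrow> nat option \<Rightarrow> nat \<times> nat list \<times> dir"

definition sym_bot :: "nat set \<Rightarrow> nat option set" where
  "sym_bot A = insert None (Some ` A)"

definition is_etm :: "machine \<Rightarrow> bool" where
  "is_etm M \<longleftrightarrow>
     finite (states M) \<and> finite (alph M) \<and>
     init M \<in> states M \<and> halt M \<in> states M \<and>
     (\<forall>q\<in>states M. \<forall>b\<in>sym_bot (alph M).
        case delta M q b of (q', \<beta>, d) \<Rightarrow>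
          q' \<in> states M \<and> set \<beta> \<subseteq> alph M \<and> (d = S \<longrightarrow> length \<beta> = 1)) \<and>
     (\<forall>a\<in>alph M. delta M (halt M) (Some a) = (halt M, [a], S)) \<and>
     (\<exists>a\<in>alph M. delta M (halt M) None = (halt M, [a], S))"

definition is_tm :: "machine \<Rightarrow> bool" where
  "is_tm M \<longleftrightarrow> is_etm M \<and>
     (\<forall>q\<in>states M. \<forall>b\<in>sym_bot (alph M).
        case delta M q b of (q', \<beta>, d) \<Rightarrow> length \<beta> = 1)"

text \<open>Configuration (q, alpha, b, gamma); alpha is the tape left of the head
  (its last element is adjacent to the head), gamma the tape right of the head.\<close>
type_synonym config = "nat \<times> nat list \<times> nat option \<times> nat list"

definition step :: "machine \<Rightarrow> config \<Rightarrow> config" where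
  "step M c = (case c of (q, \<alpha>, b, \<gamma>) \<Rightarrow>
     (case delta M q b of
        (q', \<beta>, L) \<Rightarrow>
           (if \<alpha> = [] then (q', [], None, \<beta> @ \<gamma>)
            else (q', butlast \<alpha>, Some (last \<alpha>), \<beta> @ \<gamma>))
      | (q', \<beta>, S) \<Rightarrow> (q', \<alpha>, Some (hd \<beta>), \<gamma>)
      | (q', \<beta>, R) \<Rightarrow>
           (case \<gamma> of [] \<Rightarrow> (q', \<alpha> @ \<beta>, None, [])
                    | c # \<gamma>' \<Rightarrow> (q', \<alpha> @ \<beta>, Some c, \<gamma>'))))"

definition run :: "machine \<Rightarrow> nat list \<Rightarrow> nat \<Rightarrow> config" where
  "run M w n = (step M ^^ n) (init M, [], None, w)"

definition halts :: "machine \<Rightarrow> nat list \<Rightarrow> bool" where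
  "halts M w \<longleftrightarrow> (\<exists>n. fst (run M w n) = halt M)"

definition halts_within :: "machine \<Rightarrow> nat list \<Rightarrow> nat \<Rightarrow> bool" where
  "halts_within M w t \<longleftrightarrow> (\<exists>n\<le>t. fst (run M w n) = halt M)"

definition msize :: "machine \<Rightarrow> nat" where
  "msize M = card (states M) + card (alph M) +
     (\<Sum>(q,b)\<in>states M \<times> sym_bot (alph M). length (fst (snd (delta M q b))))"

definition simulates :: "machine \<Rightarrow> machine \<Rightarrow> bool" where
  "simulates M' M \<longleftrightarrow>
     alph M \<subseteq> alph M' \<and>
     (\<forall>w\<in>lists (alph M). halts M' w \<longleftrightarrow> halts M w) \<and>
     (\<forall>p :: nat poly.
        (\<forall>w\<in>lists (alph M). halts M w \<longrightarrow> halts_within M w (poly p (length w))) \<longrightarrow>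
        (\<exists>p' :: nat poly. \<forall>w\<in>lists (alph M).
           halts M' w \<longrightarrow> halts_within M' w (poly p' (length w))))"

end

theory Submission
  imports Defs "HOL-Library.Countable"
begin

text \<open>Every Turing machine is an extended one, so only the simulation of an extended machine E by an
  ordinary one needs work. Writing a word \<open>\<beta>\<close> in one step would naively require shifting the
  right part of the tape. The simulator avoids shifting by keeping the tape \<open>\<alpha> b \<gamma>\<close> of E rotated,
  as \<open>\<gamma>\<close>, a separator, \<open>\<alpha>\<close>, \<open>b\<close>, between blocks of padding. The simulated head cell is then the
  right end of the used region: on an R step \<open>\<beta>\<close> is written into the padding to its right and the
  first letter of \<open>\<gamma>\<close> is fetched from the left end, while on an L step \<open>\<beta>\<close> belongs in front of
  \<open>\<gamma>\<close>, i.e. into the padding at the left end. So a step of E costs a bounded number of sweeps over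
  the used region, which grows by at most \<open>|\<beta>| + 2\<close> per step, and t steps of E on an input of
  length n take \<open>O(t (n + t |E|))\<close> steps. The simulator remembers the state, the symbol read and a
  position in \<open>\<beta>\<close>, so it has \<open>O(|E|\<^sup>3)\<close> states and size \<open>O(|E|\<^sup>4)\<close>.\<close>

subsection \<open>Turing machines over arbitrary states\<close>

definition last_opt :: "'a list \<Rightarrow> 'a option" where
  "last_opt xs = (if xs = [] then None else Some (last xs))"

definition hd_opt :: "'a list \<Rightarrow> 'a option" where
  "hd_opt xs = (case xs of [] \<Rightarrow> None | x # _ \<Rightarrow> Some x)"

text \<open>The simulator is built with structured states, which are numbered only at the very end
  (\<open>sim_tm\<close>).\<close>
type_synonym 's tconfig = "'s \<times> nat list \<times> nat option \<times> nat list"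

definition tm_step :: "('s \<Rightarrow> nat option \<Rightarrow> 's \<times> nat \<times> dir) \<Rightarrow> 's tconfig \<Rightarrow> 's tconfig" where
  "tm_step d c = (case c of (s, A, h, R') \<Rightarrow> (case d s h of (s', a, dd) \<Rightarrow>
      (case dd of L \<Rightarrow> (s', butlast A, last_opt A, a # R')
        | S \<Rightarrow> (s', A, Some a, R')
        | R \<Rightarrow> (s', A @ [a], hd_opt R', tl R'))))"

lemma tm_step_L: "d s h = (s', a, L) \<Longrightarrow> tm_step d (s, A, h, R') = (s', butlast A, last_opt A, a # R')"
  by (simp add: tm_step_def)
lemma tm_step_S: "d s h = (s', a, S) \<Longrightarrow> tm_step d (s, A, h, R') = (s', A, Some a, R')"
  by (simp add: tm_step_def)
lemma tm_step_R: "d s h = (s', a, R) \<Longrightarrow> tm_step d (s, A, h, R') = (s', A @ [a], hd_opt R', tl R')"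
  by (simp add: tm_step_def)

lemma funpow_chain: "(f^^a) x = y \<Longrightarrow> (f^^b) y = z \<Longrightarrow> (f^^(a+b)) x = z"
  by (metis add.commute comp_apply funpow_add)

lemma tm_step_sweep_right:
  assumes "\<forall>x\<in>set C. d s (Some x) = (s, x, R)"
  shows "((tm_step d)^^length C) (s, Lt, hd_opt (C @ r), tl (C @ r)) = (s, Lt @ C, hd_opt r, tl r)"
  using assms
proof (induction C arbitrary: Lt)
  case Nil then show ?case by simp
next
  case (Cons c C)
  have "tm_step d (s, Lt, hd_opt ((c # C) @ r), tl ((c # C) @ r)) = (s, Lt @ [c], hd_opt (C @ r), tl (C @ r))"
    using Cons.prems by (simp add: hd_opt_def tm_step_R)
  then show ?case using Cons by (simp add: funpow_Suc_right del: funpow.simps)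
qed

lemma tm_step_sweep_left:
  assumes "\<forall>x\<in>set C. d s (Some x) = (s, x, L)"
  shows "((tm_step d)^^length C) (s, butlast (A @ C), last_opt (A @ C), Rt) = (s, butlast A, last_opt A, C @ Rt)"
  using assms
proof (induction C arbitrary: Rt rule: rev_induct)
  case Nil then show ?case by simp
next
  case (snoc c C)
  have "tm_step d (s, butlast (A @ C @ [c]), last_opt (A @ C @ [c]), Rt) = (s, butlast (A @ C), last_opt (A @ C), c # Rt)"
    proof -
    have e: "butlast (A @ C @ [c]) = A @ C" "last_opt (A @ C @ [c]) = Some c"
      by (simp_all add: last_opt_def butlast_append)
    show ?thesis unfolding e using snoc.prems tm_step_L[of d s "Some c" s c "A @ C" Rt] by simp
  qed
  then show ?case using snoc by (simp add: funpow_Suc_right del: funpow.simps)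
qed

lemma card_Un_bounded: "card X \<le> a \<Longrightarrow> card Y \<le> b \<Longrightarrow> card (X \<union> Y) \<le> a + b"
  by (meson add_mono card_Un_le order_trans)

lemma card_image_bounded: "finite X \<Longrightarrow> card X \<le> a \<Longrightarrow> card (f ` X) \<le> a"
  using card_image_le order_trans by blast

lemma card_sym_bot: "finite A \<Longrightarrow> card (sym_bot A) = Suc (card A)"
  by (simp add: sym_bot_def card_image)

lemma msize_single_writes:
  assumes "finite (alph M)" "\<And>q b. length (fst (snd (delta M q b))) = 1"
  shows "msize M = card (states M) + card (alph M) + card (states M) * Suc (card (alph M))"
  using assms by (simp add: msize_def card_cartesian_product card_sym_bot case_prod_beta)

subsection \<open>The simulating machine\<close>

datatype sim_state = Start | Scan_Input | Open_Head | Sim nat | Left_Check nat "nat option" | Left_Wrap nat "nat option"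
  | Seek_Left nat "nat option" | Push nat "nat option" nat | Write nat "nat option" nat
  | Seek_Front nat | Fetch nat | Return nat | Carry nat "nat option"

instance sim_state :: countable by countable_datatype

locale etm_simulation =
  fixes E :: machine
  assumes etm: "is_etm E"
begin

text \<open>Three symbols outside the alphabet of E: the separator between \<open>\<gamma>\<close> and \<open>\<alpha>\<close>, the code of a
  blank cell of E (the simulator's own blank \<open>None\<close> only occurs outside the used region), and
  the padding.\<close>
definition "sep = Suc (Max (insert 0 (alph E)))"
definition "blank = Suc sep"
definition "pad = Suc blank"

definition "nstate q b = fst (delta E q b)"
definition "written q b = fst (snd (delta E q b))"
definition "move q b = snd (snd (delta E q b))"

definition encode_sym :: "nat option \<Rightarrow> nat" where
  "encode_sym c = (case c of None \<Rightarrow> blank | Some a \<Rightarrow> a)"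
definition decode_sym :: "nat \<Rightarrow> nat option" where
  "decode_sym x = (if x = blank then None else Some x)"
definition is_pad :: "nat option \<Rightarrow> bool" where
  "is_pad h \<longleftrightarrow> h = None \<or> h = Some pad"
definition "written_at q b i = (if i < length (written q b) then written q b ! i else pad)"
definition "write_action q b i = (if length (written q b) \<le> Suc i then (Seek_Front (nstate q b), written_at q b i, L)
    else (Write q b (Suc i), written_at q b i, R))"
definition "push_action q b i = (if i = 0 then (Return (nstate q b), written_at q b 0, R)
    else (Push q b (i - 1), written_at q b i, L))"

text \<open>Situations that cannot arise while simulating a run restart at \<open>Start\<close>.\<close>
definition sim_delta :: "sim_state \<Rightarrow> nat option \<Rightarrow> sim_state \<times> nat \<times> dir" where
 "sim_delta s h = (case s of
    Start \<Rightarrow> (Scan_Input, pad, R)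
  | Scan_Input \<Rightarrow> (case h of Some x \<Rightarrow> (Scan_Input, x, R) | None \<Rightarrow> (Open_Head, sep, R))
  | Open_Head \<Rightarrow> (Sim (init E), blank, S)
  | Sim q \<Rightarrow> (if q = halt E then (Sim q, case h of Some x \<Rightarrow> x | None \<Rightarrow> blank, S)
      else (case h of None \<Rightarrow> (Start, pad, R) | Some x \<Rightarrow> if x = sep \<or> x = pad then (Start, pad, R) else
        (case move q (decode_sym x) of
           S \<Rightarrow> (Sim (nstate q (decode_sym x)), hd (written q (decode_sym x)), S)
         | R \<Rightarrow> if written q (decode_sym x) = [] then (Seek_Front (nstate q (decode_sym x)), pad, L)
                else write_action q (decode_sym x) 0
         | L \<Rightarrow> (Left_Check q (decode_sym x), pad, L))))
  | Left_Check q b \<Rightarrow> (case h of Some x \<Rightarrow> if x = sep then (Left_Wrap q b, sep, R) else (Seek_Left q b, x, S)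
                          | None \<Rightarrow> (Seek_Left q b, pad, S))
  | Left_Wrap q b \<Rightarrow> (Seek_Left q b, blank, S)
  | Seek_Left q b \<Rightarrow> (if is_pad h then (if written q b = [] then (Return (nstate q b), pad, R)
                    else push_action q b (length (written q b) - 1)) else (Seek_Left q b, the h, L))
  | Push q b i \<Rightarrow> push_action q b i
  | Write q b i \<Rightarrow> write_action q b i
  | Seek_Front q \<Rightarrow> (if is_pad h then (Fetch q, pad, R) else (Seek_Front q, the h, L))
  | Fetch q \<Rightarrow> (case h of Some x \<Rightarrow> if x = sep then (Carry q None, sep, R)
                  else if x \<in> alph E then (Carry q (Some x), pad, R) else (Start, pad, R)
               | None \<Rightarrow> (Start, pad, R))
  | Return q \<Rightarrow> (if is_pad h then (Sim q, pad, L) else (Return q, the h, R))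
  | Carry q c \<Rightarrow> (if is_pad h then (Sim q, encode_sym c, S) else (Carry q c, the h, R)))"

abbreviation "sim_step \<equiv> tm_step sim_delta"

abbreviation pads :: "nat \<Rightarrow> nat list" where "pads n \<equiv> replicate n pad"

definition repr :: "config \<Rightarrow> nat \<Rightarrow> nat \<Rightarrow> sim_state tconfig" where
  "repr c i j = (case c of (q, \<alpha>, b, \<gamma>) \<Rightarrow> (Sim q, pads i @ \<gamma> @ [sep] @ \<alpha>, Some (encode_sym b), pads j))"

lemma finite_alph: "finite (alph E)" using etm by (simp add: is_etm_def)

lemma alph_less_sep: "a \<in> alph E \<Longrightarrow> a < sep"
  unfolding sep_def using finite_alph by (simp add: le_imp_less_Suc)

lemma markers_distinct: "sep \<noteq> blank" "sep \<noteq> pad" "blank \<noteq> pad" "blank \<noteq> sep" "pad \<noteq> sep" "pad \<noteq> blank"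
  by (simp_all add: sep_def blank_def pad_def)

lemma alph_not_marker: "a \<in> alph E \<Longrightarrow> a \<noteq> sep \<and> a \<noteq> blank \<and> a \<noteq> pad"
  using alph_less_sep[of a] by (auto simp: sep_def blank_def pad_def)

lemma pad_notin: "set C \<subseteq> alph E \<Longrightarrow> pad \<notin> set C" using alph_not_marker by blast

lemma finite_states: "finite (states E)" using etm by (simp add: is_etm_def)
lemma finite_sym_bot_alph: "finite (sym_bot (alph E))" using finite_alph by (simp add: sym_bot_def)

lemma delta_valid:
  assumes "q \<in> states E" "b \<in> sym_bot (alph E)"
  shows "nstate q b \<in> states E \<and> set (written q b) \<subseteq> alph E \<and> (move q b = S \<longrightarrow> length (written q b) = 1)"
proof -
  from etm have "\<forall>q\<in>states E. \<forall>b\<in>sym_bot (alph E). case delta E q b of (q', \<beta>, d) \<Rightarrow>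
      q' \<in> states E \<and> set \<beta> \<subseteq> alph E \<and> (d = S \<longrightarrow> length \<beta> = 1)"
    unfolding is_etm_def by (elim conjE) assumption
  from bspec[OF bspec[OF this assms(1)] assms(2)] show ?thesis by (simp add: nstate_def written_def move_def split: prod.splits)
qed

lemma encode_sym_props:
  assumes "b \<in> sym_bot (alph E)"
  shows "encode_sym b \<noteq> sep \<and> encode_sym b \<noteq> pad \<and> decode_sym (encode_sym b) = b"
  using assms alph_not_marker markers_distinct by (auto simp: sym_bot_def encode_sym_def decode_sym_def)

lemma delta_split: "delta E q b = (nstate q b, written q b, move q b)" by (simp add: nstate_def written_def move_def)

definition valid_config :: "config \<Rightarrow> bool" where
  "valid_config c = (case c of (q, \<alpha>, b, \<gamma>) \<Rightarrow>
     q \<in> states E \<and> set \<alpha> \<subseteq> alph E \<and> b \<in> sym_bot (alph E) \<and> set \<gamma> \<subseteq> alph E)"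

lemma valid_config_step: assumes "valid_config c" shows "valid_config (step E c)"
proof -
  obtain q \<alpha> b \<gamma> where c: "c = (q, \<alpha>, b, \<gamma>)" by (cases c) auto
  have v: "q \<in> states E" "set \<alpha> \<subseteq> alph E" "b \<in> sym_bot (alph E)" "set \<gamma> \<subseteq> alph E"
    using assms by (auto simp: valid_config_def c)
  obtain nq: "nstate q b \<in> states E" and bS: "set (written q b) \<subseteq> alph E"
    and dS: "move q b = S \<longrightarrow> length (written q b) = 1"
    using delta_valid[OF v(1,3)] by blast
  show ?thesis
  proof (cases "move q b")
    case L
    have "\<alpha> \<noteq> [] \<Longrightarrow> last \<alpha> \<in> alph E" using v(2) last_in_set by blast
    then show ?thesis using v nq bS L
      by (auto simp: c step_def delta_split valid_config_def sym_bot_def dest: in_set_butlastD)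
  next
    case S
    then obtain x where "written q b = [x]" using dS by (cases "written q b") auto
    then show ?thesis using v nq bS S by (auto simp: c step_def delta_split valid_config_def sym_bot_def)
  next
    case R then show ?thesis using v nq bS
      by (auto simp: c step_def delta_split valid_config_def sym_bot_def split: list.splits)
  qed
qed

lemma valid_config_run: "w \<in> lists (alph E) \<Longrightarrow> valid_config (run E w k)"
proof (induction k)
  case 0 then show ?case using etm by (auto simp: run_def valid_config_def sym_bot_def is_etm_def)
next
  case (Suc k)
  have "run E w (Suc k) = step E (run E w k)" by (simp add: run_def)
  then show ?case using Suc valid_config_step by simp
qed

lemma length_written_le: assumes "q \<in> states E" "b \<in> sym_bot (alph E)" shows "length (written q b) \<le> msize E"
proof -
  have f: "finite (states E \<times> sym_bot (alph E))" using etm finite_alph by (auto simp: is_etm_def sym_bot_def)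
  have "length (written q b) = (\<lambda>(q, b). length (fst (snd (delta E q b)))) (q, b)" by (simp add: written_def)
  also have "\<dots> \<le> (\<Sum>(q,b)\<in>states E \<times> sym_bot (alph E). length (fst (snd (delta E q b))))"
    by (rule member_le_sum) (use assms f in auto)
  also have "\<dots> \<le> msize E" by (simp add: msize_def)
  finally show ?thesis .
qed

subsection \<open>Phases of the simulation\<close>

lemma is_pad_last_pads: "is_pad (last_opt (pads n))" by (simp add: last_opt_def is_pad_def)
lemma is_pad_hd_pads: "is_pad (hd_opt (pads n))" by (cases n) (simp_all add: hd_opt_def is_pad_def)
lemma butlast_pads: "butlast (pads n) = pads (n - 1)" by (cases n) (simp_all add: butlast_append replicate_append_same[symmetric])
lemma tl_pads: "tl (pads n) = pads (n - 1)" by (cases n) simp_all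

lemma seek_front_sweep: "pad \<notin> set C \<Longrightarrow>
    (sim_step^^length C) (Seek_Front q, butlast (A @ C), last_opt (A @ C), Rt) = (Seek_Front q, butlast A, last_opt A, C @ Rt)"
  by (rule tm_step_sweep_left) (auto simp: sim_delta_def is_pad_def)

lemma seek_left_sweep: "pad \<notin> set C \<Longrightarrow>
    (sim_step^^length C) (Seek_Left q b, butlast (A @ C), last_opt (A @ C), Rt) = (Seek_Left q b, butlast A, last_opt A, C @ Rt)"
  by (rule tm_step_sweep_left) (auto simp: sim_delta_def is_pad_def)

lemma return_sweep: "pad \<notin> set C \<Longrightarrow>
    (sim_step^^length C) (Return q, Lt, hd_opt (C @ r), tl (C @ r)) = (Return q, Lt @ C, hd_opt r, tl r)"
  by (rule tm_step_sweep_right) (auto simp: sim_delta_def is_pad_def)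

lemma carry_sweep: "pad \<notin> set C \<Longrightarrow>
    (sim_step^^length C) (Carry q c, Lt, hd_opt (C @ r), tl (C @ r)) = (Carry q c, Lt @ C, hd_opt r, tl r)"
  by (rule tm_step_sweep_right) (auto simp: sim_delta_def is_pad_def)

lemma scan_input_sweep: "(sim_step^^length C) (Scan_Input, Lt, hd_opt (C @ r), tl (C @ r)) = (Scan_Input, Lt @ C, hd_opt r, tl r)"
  by (rule tm_step_sweep_right) (auto simp: sim_delta_def)

lemma write_phase:
  assumes "Suc i + d = length (written q b)" "sim_delta s h = write_action q b i"
  shows "(sim_step^^Suc d) (s, Lt, h, pads j) = (Seek_Front (nstate q b), butlast (Lt @ take d (drop i (written q b))),
           last_opt (Lt @ take d (drop i (written q b))), last (written q b) # pads (j - d))"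
  using assms
proof (induction d arbitrary: i s h Lt j)
  case 0
  moreover have "written q b \<noteq> []" using 0 by auto
  moreover have li: "length (written q b) - 1 = i" using 0 by simp
  ultimately have "sim_delta s h = (Seek_Front (nstate q b), last (written q b), L)"
    by (simp add: write_action_def written_at_def last_conv_nth li)
  then show ?case by (simp add: tm_step_L)
next
  case (Suc d)
  have st: "sim_delta s h = (Write q b (Suc i), written q b ! i, R)" using Suc.prems
    by (simp add: write_action_def written_at_def)
  have "sim_step (s, Lt, h, pads j) = (Write q b (Suc i), Lt @ [written q b ! i], hd_opt (pads j), pads (j - 1))"
    using tm_step_R[of sim_delta, OF st] by (simp add: tl_pads)
  moreover have "(sim_step^^Suc d) (Write q b (Suc i), Lt @ [written q b ! i], hd_opt (pads j), pads (j - 1)) =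
     (Seek_Front (nstate q b), butlast ((Lt @ [written q b ! i]) @ take d (drop (Suc i) (written q b))),
           last_opt ((Lt @ [written q b ! i]) @ take d (drop (Suc i) (written q b))), last (written q b) # pads (j - 1 - d))"
    using Suc.prems by (intro Suc.IH) (auto simp: sim_delta_def)
  moreover have "drop i (written q b) = written q b ! i # drop (Suc i) (written q b)"
    using Suc.prems by (simp add: Cons_nth_drop_Suc)
  ultimately show ?case by (simp add: funpow_Suc_right del: funpow.simps)
qed

lemma push_phase:
  assumes "i < length (written q b)" "sim_delta s h = push_action q b i"
  shows "(sim_step^^Suc i) (s, pads a, h, Rt) = (Return (nstate q b), pads (a - i) @ [written q b ! 0],
     hd_opt (drop 1 (take (Suc i) (written q b)) @ Rt), tl (drop 1 (take (Suc i) (written q b)) @ Rt))"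
  using assms
proof (induction i arbitrary: a h s Rt)
  case 0
  then have "sim_delta s h = (Return (nstate q b), written q b ! 0, R)"
    by (simp add: push_action_def written_at_def)
  then show ?case by (simp add: tm_step_R)
next
  case (Suc i)
  have st: "sim_delta s h = (Push q b i, written q b ! Suc i, L)" using Suc.prems
    by (simp add: push_action_def written_at_def)
  have "sim_step (s, pads a, h, Rt) = (Push q b i, pads (a - 1), last_opt (pads a), written q b ! Suc i # Rt)"
    using tm_step_L[of sim_delta, OF st] by (simp add: butlast_pads)
  moreover have "(sim_step^^Suc i) (Push q b i, pads (a - 1), last_opt (pads a), written q b ! Suc i # Rt) =
     (Return (nstate q b), pads (a - 1 - i) @ [written q b ! 0],
     hd_opt (drop 1 (take (Suc i) (written q b)) @ written q b ! Suc i # Rt), tl (drop 1 (take (Suc i) (written q b)) @ written q b ! Suc i # Rt))"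
    using Suc.prems by (intro Suc.IH) (auto simp: sim_delta_def)
  moreover have "drop 1 (take (Suc (Suc i)) (written q b)) = drop 1 (take (Suc i) (written q b)) @ [written q b ! Suc i]"
    using Suc.prems by (simp add: take_Suc_conv_app_nth[of "Suc i"] del: take_Suc)
  moreover have "a - 1 - i = a - Suc i" by simp
  ultimately show ?case by (simp add: funpow_Suc_right del: funpow.simps)
qed

lemma carry_phase:
  assumes "pad \<notin> set X"
  shows "(sim_step^^(length X + 1)) (Carry q c, A, hd_opt (X @ pads r), tl (X @ pads r)) =
    (Sim q, A @ X, Some (encode_sym c), pads (r - 1))"
proof -
  have "(sim_step^^length X) (Carry q c, A, hd_opt (X @ pads r), tl (X @ pads r)) =
      (Carry q c, A @ X, hd_opt (pads r), tl (pads r))"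
    using carry_sweep[OF assms] .
  moreover have "(sim_step^^1) (Carry q c, A @ X, hd_opt (pads r), tl (pads r)) =
      (Sim q, A @ X, Some (encode_sym c), pads (r - 1))"
    using tm_step_S[of sim_delta] is_pad_hd_pads by (simp add: sim_delta_def tl_pads)
  ultimately show ?thesis by (rule funpow_chain)
qed

lemma fetch_phase:
  assumes "set \<gamma> \<subseteq> alph E" "set \<alpha> \<subseteq> alph E"
  shows "\<exists>n i' j'. n \<le> length \<gamma> + length \<alpha> + 3 \<and>
    (sim_step^^n) (Seek_Front q, butlast (pads i), last_opt (pads i), \<gamma> @ [sep] @ \<alpha> @ pads r) = repr (q, \<alpha>, hd_opt \<gamma>, tl \<gamma>) i' j'
    \<and> i' + length (tl \<gamma>) + j' \<le> i + length \<gamma> + r + 1"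
proof -
  have fetch: "(sim_step^^1) (Seek_Front q, butlast (pads i), last_opt (pads i), \<gamma> @ [sep] @ \<alpha> @ pads r) =
     (Fetch q, pads (Suc (i - 1)), hd_opt (\<gamma> @ [sep] @ \<alpha> @ pads r), tl (\<gamma> @ [sep] @ \<alpha> @ pads r))"
    using tm_step_R[of sim_delta] is_pad_last_pads
    by (simp add: sim_delta_def butlast_pads replicate_append_same)
  have \<alpha>: "pad \<notin> set \<alpha>" using assms pad_notin by blast
  show ?thesis
  proof (cases \<gamma>)
    case Nil
    have "(sim_step^^1) (Fetch q, pads (Suc (i - 1)), hd_opt (\<gamma> @ [sep] @ \<alpha> @ pads r), tl (\<gamma> @ [sep] @ \<alpha> @ pads r))
       = (Carry q None, pads (Suc (i - 1)) @ [sep], hd_opt (\<alpha> @ pads r), tl (\<alpha> @ pads r))"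
      using Nil by (simp add: tm_step_def sim_delta_def hd_opt_def)
    from funpow_chain[OF funpow_chain[OF fetch this] carry_phase[OF \<alpha>]]
    have "(sim_step^^(1 + 1 + (length \<alpha> + 1))) (Seek_Front q, butlast (pads i), last_opt (pads i), \<gamma> @ [sep] @ \<alpha> @ pads r)
       = repr (q, \<alpha>, hd_opt \<gamma>, tl \<gamma>) (Suc (i - 1)) (r - 1)"
      using Nil by (simp add: repr_def encode_sym_def hd_opt_def)
    moreover have "1 + 1 + (length \<alpha> + 1) \<le> length \<gamma> + length \<alpha> + 3" by simp
    moreover have "Suc (i - 1) + length (tl \<gamma>) + (r - 1) \<le> i + length \<gamma> + r + 1" using Nil by simp
    ultimately show ?thesis by blast
  next
    case (Cons c g)
    have c: "c \<in> alph E" using assms Cons by auto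
    have g: "pad \<notin> set (g @ [sep] @ \<alpha>)" using assms pad_notin[of g] Cons \<alpha> markers_distinct by auto
    have "(sim_step^^1) (Fetch q, pads (Suc (i - 1)), hd_opt (\<gamma> @ [sep] @ \<alpha> @ pads r), tl (\<gamma> @ [sep] @ \<alpha> @ pads r))
       = (Carry q (Some c), pads (Suc (i - 1)) @ [pad], hd_opt ((g @ [sep] @ \<alpha>) @ pads r), tl ((g @ [sep] @ \<alpha>) @ pads r))"
      using Cons c alph_not_marker[OF c] by (simp add: tm_step_def sim_delta_def hd_opt_def)
    from funpow_chain[OF funpow_chain[OF fetch this] carry_phase[OF g]]
    have "(sim_step^^(1 + 1 + (length (g @ [sep] @ \<alpha>) + 1)))
        (Seek_Front q, butlast (pads i), last_opt (pads i), \<gamma> @ [sep] @ \<alpha> @ pads r)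
       = repr (q, \<alpha>, hd_opt \<gamma>, tl \<gamma>) (Suc (Suc (i - 1))) (r - 1)"
      using Cons by (simp add: repr_def encode_sym_def hd_opt_def replicate_append_same)
    moreover have "1 + 1 + (length (g @ [sep] @ \<alpha>) + 1) \<le> length \<gamma> + length \<alpha> + 3" using Cons by simp
    moreover have "Suc (Suc (i - 1)) + length (tl \<gamma>) + (r - 1) \<le> i + length \<gamma> + r + 1" using Cons by simp
    ultimately show ?thesis by blast
  qed
qed

lemma push_word:
  assumes "pad \<notin> set X" "set (written q b) \<subseteq> alph E"
  shows "\<exists>n x. n \<le> 2 * length (written q b) + length X + 1 \<and> x \<le> i + 1 \<and>
    (sim_step^^n) (Seek_Left q b, butlast (pads i), last_opt (pads i), X @ pads r) =
      (Return (nstate q b), pads x @ written q b @ X, hd_opt (pads r), tl (pads r))"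
proof (cases "written q b = []")
  case True
  have "(sim_step^^1) (Seek_Left q b, butlast (pads i), last_opt (pads i), X @ pads r) =
      (Return (nstate q b), pads (Suc (i - 1)), hd_opt (X @ pads r), tl (X @ pads r))"
    using tm_step_R[of sim_delta] is_pad_last_pads True
    by (simp add: sim_delta_def butlast_pads replicate_append_same)
  moreover have "(sim_step^^length X) (Return (nstate q b), pads (Suc (i - 1)), hd_opt (X @ pads r), tl (X @ pads r)) =
      (Return (nstate q b), pads (Suc (i - 1)) @ written q b @ X, hd_opt (pads r), tl (pads r))"
    using return_sweep[OF assms(1)] True by simp
  ultimately have "(sim_step^^(1 + length X)) (Seek_Left q b, butlast (pads i), last_opt (pads i), X @ pads r) =
      (Return (nstate q b), pads (Suc (i - 1)) @ written q b @ X, hd_opt (pads r), tl (pads r))"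
    by (rule funpow_chain)
  moreover have "1 + length X \<le> 2 * length (written q b) + length X + 1" "Suc (i - 1) \<le> i + 1" by simp_all
  ultimately show ?thesis by blast
next
  case False
  define k where "k = length (written q b)"
  have k: "0 < k" "take (Suc (k - 1)) (written q b) = written q b" using False by (simp_all add: k_def)
  have "sim_delta (Seek_Left q b) (last_opt (pads i)) = push_action q b (k - 1)"
    using is_pad_last_pads False by (simp add: sim_delta_def k_def)
  then have "(sim_step^^Suc (k - 1)) (Seek_Left q b, pads (i - 1), last_opt (pads i), X @ pads r) =
      (Return (nstate q b), pads (i - 1 - (k - 1)) @ [written q b ! 0],
       hd_opt (drop 1 (take (Suc (k - 1)) (written q b)) @ X @ pads r),
       tl (drop 1 (take (Suc (k - 1)) (written q b)) @ X @ pads r))"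
    using k by (intro push_phase) (simp_all add: k_def)
  then have "(sim_step^^Suc (k - 1)) (Seek_Left q b, pads (i - 1), last_opt (pads i), X @ pads r) =
      (Return (nstate q b), pads (i - 1 - (k - 1)) @ [written q b ! 0],
       hd_opt ((drop 1 (written q b) @ X) @ pads r), tl ((drop 1 (written q b) @ X) @ pads r))"
    unfolding k(2) by simp
  moreover have "(sim_step^^length (drop 1 (written q b) @ X)) (Return (nstate q b), pads (i - 1 - (k - 1)) @ [written q b ! 0],
       hd_opt ((drop 1 (written q b) @ X) @ pads r), tl ((drop 1 (written q b) @ X) @ pads r)) =
      (Return (nstate q b), pads (i - 1 - (k - 1)) @ written q b @ X, hd_opt (pads r), tl (pads r))"
  proof -
    have "pad \<notin> set (drop 1 (written q b) @ X)"
      using assms pad_notin[of "written q b"] by (auto dest: in_set_dropD)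
    moreover have "[written q b ! 0] @ drop 1 (written q b) = written q b"
      using False by (cases "written q b") auto
    ultimately show ?thesis using return_sweep by (metis append.assoc)
  qed
  ultimately have "(sim_step^^(Suc (k - 1) + length (drop 1 (written q b) @ X)))
      (Seek_Left q b, butlast (pads i), last_opt (pads i), X @ pads r) =
      (Return (nstate q b), pads (i - 1 - (k - 1)) @ written q b @ X, hd_opt (pads r), tl (pads r))"
    unfolding butlast_pads by (rule funpow_chain)
  moreover have "Suc (k - 1) + length (drop 1 (written q b) @ X) \<le> 2 * length (written q b) + length X + 1"
    "i - 1 - (k - 1) \<le> i + 1" using k by (simp_all add: k_def)
  ultimately show ?thesis by blast
qed

lemma push_return_phase:
  assumes "C \<noteq> []" "pad \<notin> set C" "set (written q b) \<subseteq> alph E"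
  shows "\<exists>n x. n \<le> 2 * length C + 2 * length (written q b) + 2 \<and>
    (sim_step^^n) (Seek_Left q b, butlast (pads i @ C), last_opt (pads i @ C), pads r) =
      (Sim (nstate q b), pads x @ written q b @ butlast C, Some (last C), pads (Suc (r - 1))) \<and> x \<le> i + 1"
proof -
  have "(sim_step^^length C) (Seek_Left q b, butlast (pads i @ C), last_opt (pads i @ C), pads r) =
      (Seek_Left q b, butlast (pads i), last_opt (pads i), C @ pads r)"
    using seek_left_sweep[OF assms(2)] .
  moreover obtain n x where "n \<le> 2 * length (written q b) + length C + 1" "x \<le> i + 1"
    and "(sim_step^^n) (Seek_Left q b, butlast (pads i), last_opt (pads i), C @ pads r) =
      (Return (nstate q b), pads x @ written q b @ C, hd_opt (pads r), tl (pads r))"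
    using push_word[OF assms(2,3)] by blast
  moreover have "(sim_step^^1) (Return (nstate q b), pads x @ written q b @ C, hd_opt (pads r), tl (pads r)) =
      (Sim (nstate q b), pads x @ written q b @ butlast C, Some (last C), pads (Suc (r - 1)))"
    using tm_step_L[of sim_delta] is_pad_hd_pads assms(1)
    by (simp add: sim_delta_def last_opt_def tl_pads butlast_append)
  ultimately have "(sim_step^^(length C + n + 1)) (Seek_Left q b, butlast (pads i @ C), last_opt (pads i @ C), pads r) =
      (Sim (nstate q b), pads x @ written q b @ butlast C, Some (last C), pads (Suc (r - 1)))"
    by (metis funpow_chain)
  moreover have "length C + n + 1 \<le> 2 * length C + 2 * length (written q b) + 2"
    using \<open>n \<le> 2 * length (written q b) + length C + 1\<close> by simp
  ultimately show ?thesis using \<open>x \<le> i + 1\<close> by blast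
qed

subsection \<open>Simulation of a single step\<close>

definition repr_size :: "config \<Rightarrow> nat \<Rightarrow> nat \<Rightarrow> nat" where
  "repr_size c i j = (case c of (q, \<alpha>, b, \<gamma>) \<Rightarrow> i + length \<gamma> + length \<alpha> + j)"

definition step_simulated :: "config \<Rightarrow> nat \<Rightarrow> nat \<Rightarrow> bool" where
  "step_simulated c i j \<longleftrightarrow> (case c of (q, \<alpha>, b, \<gamma>) \<Rightarrow> \<exists>n i' j'. 0 < n \<and>
     n \<le> 2 * repr_size c i j + 3 * length (written q b) + 12 \<and>
     (sim_step^^n) (repr c i j) = repr (step E c) i' j' \<and>
     repr_size (step E c) i' j' \<le> repr_size c i j + length (written q b) + 2)"

lemma step_simulatedI:
  assumes "(sim_step^^n) (repr (q, \<alpha>, b, \<gamma>) i j) = repr (step E (q, \<alpha>, b, \<gamma>)) i' j'" "0 < n"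
    and "n \<le> 2 * (i + length \<gamma> + length \<alpha> + j) + 3 * length (written q b) + 12"
    and "repr_size (step E (q, \<alpha>, b, \<gamma>)) i' j' \<le> i + length \<gamma> + length \<alpha> + j + length (written q b) + 2"
  shows "step_simulated (q, \<alpha>, b, \<gamma>) i j"
  using assms unfolding step_simulated_def repr_size_def by auto

context
  fixes q \<alpha> b \<gamma>
  assumes q_state: "q \<in> states E" and q_running: "q \<noteq> halt E"
    and \<alpha>_alph: "set \<alpha> \<subseteq> alph E" and \<gamma>_alph: "set \<gamma> \<subseteq> alph E" and b_sym: "b \<in> sym_bot (alph E)"
begin

lemma written_alph: "set (written q b) \<subseteq> alph E"
  using delta_valid[OF q_state b_sym] by blast

lemma sim_delta_Sim: "sim_delta (Sim q) (Some (encode_sym b)) = (case move q b of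
      S \<Rightarrow> (Sim (nstate q b), hd (written q b), S)
    | R \<Rightarrow> if written q b = [] then (Seek_Front (nstate q b), pad, L) else write_action q b 0
    | L \<Rightarrow> (Left_Check q b, pad, L))"
  using q_running encode_sym_props[OF b_sym] by (simp add: sim_delta_def split: dir.split)

lemma step_simulated_stay:
  assumes "move q b = S"
  shows "step_simulated (q, \<alpha>, b, \<gamma>) i j"
proof -
  have st: "step E (q, \<alpha>, b, \<gamma>) = (nstate q b, \<alpha>, Some (hd (written q b)), \<gamma>)"
    by (simp add: step_def delta_split assms)
  have "(sim_step^^1) (repr (q, \<alpha>, b, \<gamma>) i j) = repr (step E (q, \<alpha>, b, \<gamma>)) i j"
    using tm_step_S[of sim_delta, OF sim_delta_Sim[unfolded assms dir.case]]
    by (simp add: st repr_def encode_sym_def)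
  then show ?thesis by (rule step_simulatedI) (auto simp: st repr_size_def)
qed

text \<open>At the left end of the simulated tape the new head cell is a fresh blank, created
  between the separator and the pushed word.\<close>
lemma step_simulated_left_at_end:
  assumes "move q b = L" "\<alpha> = []"
  shows "step_simulated (q, \<alpha>, b, \<gamma>) i j"
proof -
  define C where "C = \<gamma> @ [sep, blank]"
  have st: "step E (q, \<alpha>, b, \<gamma>) = (nstate q b, [], None, written q b @ \<gamma>)"
    by (simp add: step_def delta_split assms)
  have "(sim_step^^1) (repr (q, \<alpha>, b, \<gamma>) i j) = (Left_Check q b, pads i @ \<gamma>, Some sep, pad # pads j)"
    using tm_step_L[of sim_delta, OF sim_delta_Sim[unfolded assms(1) dir.case]] assms(2)
    by (simp add: repr_def last_opt_def butlast_append)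
  moreover have "(sim_step^^1) (Left_Check q b, pads i @ \<gamma>, Some sep, pad # pads j) =
      (Left_Wrap q b, pads i @ \<gamma> @ [sep], Some pad, pads j)"
    by (simp add: tm_step_def sim_delta_def hd_opt_def)
  moreover have "(sim_step^^1) (Left_Wrap q b, pads i @ \<gamma> @ [sep], Some pad, pads j) =
      (Seek_Left q b, butlast (pads i @ C), last_opt (pads i @ C), pads j)"
    by (simp add: tm_step_def sim_delta_def C_def last_opt_def butlast_append)
  moreover obtain n x where n: "n \<le> 2 * length C + 2 * length (written q b) + 2" and "x \<le> i + 1"
    and "(sim_step^^n) (Seek_Left q b, butlast (pads i @ C), last_opt (pads i @ C), pads j) =
      (Sim (nstate q b), pads x @ written q b @ butlast C, Some (last C), pads (Suc (j - 1)))"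
    using push_return_phase[of C, OF _ _ written_alph, of i j] pad_notin[OF \<gamma>_alph] markers_distinct
    by (auto simp: C_def)
  moreover have "(Sim (nstate q b), pads x @ written q b @ butlast C, Some (last C), pads (Suc (j - 1)))
      = repr (step E (q, \<alpha>, b, \<gamma>)) x (Suc (j - 1))"
    by (simp add: st repr_def encode_sym_def butlast_append C_def)
  ultimately have "(sim_step^^(1 + 1 + 1 + n)) (repr (q, \<alpha>, b, \<gamma>) i j) = repr (step E (q, \<alpha>, b, \<gamma>)) x (Suc (j - 1))"
    by (metis funpow_chain)
  then show ?thesis
    by (rule step_simulatedI) (use n \<open>x \<le> i + 1\<close> in \<open>auto simp: st repr_size_def C_def\<close>)
qed

lemma step_simulated_left:
  assumes "move q b = L" "\<alpha> = \<alpha>' @ [a]"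
  shows "step_simulated (q, \<alpha>, b, \<gamma>) i j"
proof -
  define C where "C = \<gamma> @ [sep] @ \<alpha>' @ [a]"
  have a: "a \<in> alph E" using \<alpha>_alph assms(2) by auto
  have len: "length \<alpha> = Suc (length \<alpha>')" using assms(2) by simp
  have st: "step E (q, \<alpha>, b, \<gamma>) = (nstate q b, \<alpha>', Some a, written q b @ \<gamma>)"
    by (simp add: step_def delta_split assms)
  have "(sim_step^^1) (repr (q, \<alpha>, b, \<gamma>) i j) = (Left_Check q b, pads i @ \<gamma> @ [sep] @ \<alpha>', Some a, pad # pads j)"
    using tm_step_L[of sim_delta, OF sim_delta_Sim[unfolded assms(1) dir.case]] assms(2)
    by (simp add: repr_def last_opt_def butlast_append)
  moreover have "(sim_step^^1) (Left_Check q b, pads i @ \<gamma> @ [sep] @ \<alpha>', Some a, pad # pads j) =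
      (Seek_Left q b, butlast (pads i @ C), last_opt (pads i @ C), pads (Suc j))"
    using alph_not_marker[OF a] by (simp add: tm_step_def sim_delta_def C_def last_opt_def butlast_append)
  moreover obtain n x where n: "n \<le> 2 * length C + 2 * length (written q b) + 2" and "x \<le> i + 1"
    and "(sim_step^^n) (Seek_Left q b, butlast (pads i @ C), last_opt (pads i @ C), pads (Suc j)) =
      (Sim (nstate q b), pads x @ written q b @ butlast C, Some (last C), pads (Suc (Suc j - 1)))"
    using push_return_phase[of C, OF _ _ written_alph, of i "Suc j"]
      pad_notin[OF \<gamma>_alph] pad_notin[OF \<alpha>_alph] markers_distinct assms(2)
    by (auto simp: C_def)
  moreover have "(Sim (nstate q b), pads x @ written q b @ butlast C, Some (last C), pads (Suc (Suc j - 1)))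
      = repr (step E (q, \<alpha>, b, \<gamma>)) x (Suc j)"
    by (simp add: st repr_def encode_sym_def butlast_append C_def)
  ultimately have "(sim_step^^(1 + 1 + n)) (repr (q, \<alpha>, b, \<gamma>) i j) = repr (step E (q, \<alpha>, b, \<gamma>)) x (Suc j)"
    by (metis funpow_chain)
  then show ?thesis
    by (rule step_simulatedI) (use n \<open>x \<le> i + 1\<close> len in \<open>auto simp: st repr_size_def C_def\<close>)
qed

lemma step_simulated_right_empty:
  assumes "move q b = R" "written q b = []"
  shows "step_simulated (q, \<alpha>, b, \<gamma>) i j"
proof -
  define C where "C = \<gamma> @ [sep] @ \<alpha>"
  have st: "step E (q, \<alpha>, b, \<gamma>) = (nstate q b, \<alpha>, hd_opt \<gamma>, tl \<gamma>)"
    by (cases \<gamma>) (simp_all add: step_def delta_split assms hd_opt_def)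
  have "(sim_step^^1) (repr (q, \<alpha>, b, \<gamma>) i j) =
      (Seek_Front (nstate q b), butlast (pads i @ C), last_opt (pads i @ C), pad # pads j)"
  proof -
    have "sim_delta (Sim q) (Some (encode_sym b)) = (Seek_Front (nstate q b), pad, L)"
      using sim_delta_Sim assms by simp
    then show ?thesis using tm_step_L[of sim_delta] by (simp add: repr_def C_def)
  qed
  moreover have "(sim_step^^length C) (Seek_Front (nstate q b), butlast (pads i @ C), last_opt (pads i @ C), pad # pads j) =
      (Seek_Front (nstate q b), butlast (pads i), last_opt (pads i), \<gamma> @ [sep] @ \<alpha> @ pads (Suc j))"
    using seek_front_sweep[of C]
      pad_notin[OF \<gamma>_alph] pad_notin[OF \<alpha>_alph] markers_distinct
    by (auto simp: C_def)
  moreover obtain n i' j' where n: "n \<le> length \<gamma> + length \<alpha> + 3"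
    and "(sim_step^^n) (Seek_Front (nstate q b), butlast (pads i), last_opt (pads i), \<gamma> @ [sep] @ \<alpha> @ pads (Suc j))
      = repr (nstate q b, \<alpha>, hd_opt \<gamma>, tl \<gamma>) i' j'"
    and size: "i' + length (tl \<gamma>) + j' \<le> i + length \<gamma> + Suc j + 1"
    using fetch_phase[OF \<gamma>_alph \<alpha>_alph] by blast
  ultimately have "(sim_step^^(1 + length C + n)) (repr (q, \<alpha>, b, \<gamma>) i j) = repr (step E (q, \<alpha>, b, \<gamma>)) i' j'"
    unfolding st by (metis funpow_chain)
  then show ?thesis
    by (rule step_simulatedI) (use n size assms in \<open>auto simp: st repr_size_def C_def\<close>)
qed

lemma step_simulated_right:
  assumes "move q b = R" "written q b \<noteq> []"
  shows "step_simulated (q, \<alpha>, b, \<gamma>) i j"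
proof -
  define k where "k = length (written q b)"
  define C where "C = \<gamma> @ [sep] @ \<alpha> @ butlast (written q b)"
  have k: "0 < k" using assms(2) by (simp add: k_def)
  have st: "step E (q, \<alpha>, b, \<gamma>) = (nstate q b, \<alpha> @ written q b, hd_opt \<gamma>, tl \<gamma>)"
    by (cases \<gamma>) (simp_all add: step_def delta_split assms(1) hd_opt_def)
  have "(sim_step^^Suc (k - 1)) (repr (q, \<alpha>, b, \<gamma>) i j) =
      (Seek_Front (nstate q b), butlast (pads i @ C), last_opt (pads i @ C), last (written q b) # pads (j - (k - 1)))"
  proof -
    have "(sim_step^^Suc (k - 1)) (Sim q, pads i @ \<gamma> @ [sep] @ \<alpha>, Some (encode_sym b), pads j) =
        (Seek_Front (nstate q b), butlast ((pads i @ \<gamma> @ [sep] @ \<alpha>) @ take (k - 1) (drop 0 (written q b))),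
         last_opt ((pads i @ \<gamma> @ [sep] @ \<alpha>) @ take (k - 1) (drop 0 (written q b))), last (written q b) # pads (j - (k - 1)))"
      by (rule write_phase) (use k sim_delta_Sim assms in \<open>auto simp: k_def\<close>)
    then show ?thesis by (simp add: repr_def C_def k_def butlast_conv_take)
  qed
  moreover have "(sim_step^^length C) (Seek_Front (nstate q b), butlast (pads i @ C), last_opt (pads i @ C),
        last (written q b) # pads (j - (k - 1))) =
      (Seek_Front (nstate q b), butlast (pads i), last_opt (pads i), \<gamma> @ [sep] @ (\<alpha> @ written q b) @ pads (j - (k - 1)))"
  proof -
    have "pad \<notin> set C"
      using pad_notin[OF \<gamma>_alph] pad_notin[OF \<alpha>_alph] pad_notin[OF written_alph] markers_distinct
      by (auto simp: C_def dest: in_set_butlastD)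
    moreover have "C @ last (written q b) # pads (j - (k - 1)) = \<gamma> @ [sep] @ (\<alpha> @ written q b) @ pads (j - (k - 1))"
      using assms(2) by (simp add: C_def)
    ultimately show ?thesis
      using seek_front_sweep by metis
  qed
  moreover obtain n i' j' where n: "n \<le> length \<gamma> + length (\<alpha> @ written q b) + 3"
    and "(sim_step^^n) (Seek_Front (nstate q b), butlast (pads i), last_opt (pads i),
        \<gamma> @ [sep] @ (\<alpha> @ written q b) @ pads (j - (k - 1))) = repr (nstate q b, \<alpha> @ written q b, hd_opt \<gamma>, tl \<gamma>) i' j'"
    and size: "i' + length (tl \<gamma>) + j' \<le> i + length \<gamma> + (j - (k - 1)) + 1"
    using fetch_phase[OF \<gamma>_alph, of "\<alpha> @ written q b" "nstate q b" i "j - (k - 1)"] \<alpha>_alph written_alph by auto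
  ultimately have "(sim_step^^(Suc (k - 1) + length C + n)) (repr (q, \<alpha>, b, \<gamma>) i j) = repr (step E (q, \<alpha>, b, \<gamma>)) i' j'"
    unfolding st by (metis funpow_chain)
  then show ?thesis
    by (rule step_simulatedI) (use n size k in \<open>auto simp: st repr_size_def C_def k_def\<close>)
qed

end

lemma step_simulated:
  assumes "valid_config (q, \<alpha>, b, \<gamma>)" "q \<noteq> halt E"
  shows "step_simulated (q, \<alpha>, b, \<gamma>) i j"
proof -
  have v: "q \<in> states E" "set \<alpha> \<subseteq> alph E" "set \<gamma> \<subseteq> alph E" "b \<in> sym_bot (alph E)"
    using assms(1) by (auto simp: valid_config_def)
  note cases = step_simulated_stay step_simulated_left_at_end step_simulated_left
    step_simulated_right_empty step_simulated_right
  show ?thesis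
  proof (cases "move q b")
    case L then show ?thesis using cases(2,3)[OF v(1) assms(2) v(2,3,4)] by (cases \<alpha> rule: rev_cases) auto
  next
    case S then show ?thesis using cases(1)[OF v(1) assms(2) v(2,3,4)] by blast
  next
    case R then show ?thesis using cases(4,5)[OF v(1) assms(2) v(2,3,4)] by blast
  qed
qed

subsection \<open>Simulation of runs\<close>

lemma init_phase: "(sim_step^^(length w + 3)) (Start, [], None, w) = repr (init E, [], None, w) 1 0"
proof -
  have s1: "(sim_step^^1) (Start, [], None, w) = (Scan_Input, [pad], hd_opt (w @ []), tl (w @ []))"
    using tm_step_R[of sim_delta Start None Scan_Input pad] by (simp add: sim_delta_def)
  have s2: "(sim_step^^length w) (Scan_Input, [pad], hd_opt (w @ []), tl (w @ [])) = (Scan_Input, [pad] @ w, None, [])"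
    using scan_input_sweep[of w "[pad]" "[]"] by (simp add: hd_opt_def)
  have s3: "(sim_step^^1) (Scan_Input, [pad] @ w, None, []) = (Open_Head, [pad] @ w @ [sep], None, [])"
    using tm_step_R[of sim_delta Scan_Input None Open_Head sep] by (simp add: sim_delta_def hd_opt_def)
  have s4: "(sim_step^^1) (Open_Head, [pad] @ w @ [sep], None, []) = repr (init E, [], None, w) (Suc 0) 0"
    using tm_step_S[of sim_delta Open_Head None "Sim (init E)" blank] by (simp add: sim_delta_def repr_def encode_sym_def)
  have "1 + length w + 1 + 1 = length w + 3" by simp
  then show ?thesis using funpow_chain[OF funpow_chain[OF funpow_chain[OF s1 s2] s3] s4] by (metis One_nat_def)
qed

definition time_bound :: "nat \<Rightarrow> nat \<Rightarrow> nat" where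
  "time_bound n k = n + 3 + k * (2 * (n + 1 + k * (msize E + 2)) + 3 * msize E + 12)"

lemma time_bound_Suc:
  "time_bound n k + (2 * (n + 1 + k * (msize E + 2)) + 3 * msize E + 12) \<le> time_bound n (Suc k)"
  by (simp add: time_bound_def algebra_simps)

lemma time_bound_mono: "k \<le> k' \<Longrightarrow> time_bound n k \<le> time_bound n k'"
  unfolding time_bound_def by (intro add_mono mult_le_mono) auto

lemma run_simulated:
  assumes w: "w \<in> lists (alph E)" and running: "\<forall>j<k. fst (run E w j) \<noteq> halt E"
  shows "\<exists>t i j. k \<le> t \<and> t \<le> time_bound (length w) k \<and> (sim_step^^t) (Start, [], None, w) = repr (run E w k) i j
     \<and> repr_size (run E w k) i j \<le> length w + 1 + k * (msize E + 2)"
  using running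
proof (induction k)
  case 0
  show ?case
    using init_phase by (intro exI[of _ "length w + 3"] exI[of _ 1] exI[of _ 0]) (auto simp: run_def repr_size_def time_bound_def)
next
  case (Suc k)
  then obtain t i j where t: "k \<le> t" "t \<le> time_bound (length w) k"
    and reached: "(sim_step^^t) (Start, [], None, w) = repr (run E w k) i j"
    and size: "repr_size (run E w k) i j \<le> length w + 1 + k * (msize E + 2)" by auto
  obtain q \<alpha> b \<gamma> where c: "run E w k = (q, \<alpha>, b, \<gamma>)" by (cases "run E w k") auto
  have v: "valid_config (q, \<alpha>, b, \<gamma>)" using valid_config_run[OF w, of k] c by simp
  have "q \<noteq> halt E" using Suc.prems c by (metis fst_conv lessI)
  then have "step_simulated (q, \<alpha>, b, \<gamma>) i j" using step_simulated v by blast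
  then obtain n i' j' where n: "0 < n" "n \<le> 2 * repr_size (q, \<alpha>, b, \<gamma>) i j + 3 * length (written q b) + 12"
    and step: "(sim_step^^n) (repr (q, \<alpha>, b, \<gamma>) i j) = repr (step E (q, \<alpha>, b, \<gamma>)) i' j'"
    and size': "repr_size (step E (q, \<alpha>, b, \<gamma>)) i' j' \<le> repr_size (q, \<alpha>, b, \<gamma>) i j + length (written q b) + 2"
    unfolding step_simulated_def by auto
  have "length (written q b) \<le> msize E" using length_written_le v by (simp add: valid_config_def)
  moreover have "run E w (Suc k) = step E (q, \<alpha>, b, \<gamma>)" using c by (simp add: run_def)
  moreover have "(sim_step^^(t + n)) (Start, [], None, w) = repr (step E (q, \<alpha>, b, \<gamma>)) i' j'"
    using funpow_chain[OF reached[unfolded c] step] .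
  ultimately show ?case using t n size size' c time_bound_Suc[of "length w" k]
    by (intro exI[of _ "t + n"] exI conjI) auto
qed

lemma halt_absorbing: "fst c = Sim (halt E) \<Longrightarrow> fst ((sim_step^^n) c) = Sim (halt E)"
proof (induction n)
  case 0 then show ?case by simp
next
  case (Suc n)
  then obtain A h R' where "(sim_step^^n) c = (Sim (halt E), A, h, R')" by (cases "(sim_step^^n) c") auto
  moreover have "sim_delta (Sim (halt E)) h = (Sim (halt E), case h of Some x \<Rightarrow> x | None \<Rightarrow> blank, S)"
    by (simp add: sim_delta_def)
  ultimately show ?case using tm_step_S[of sim_delta] by simp
qed

lemma fst_repr: "fst (repr c i j) = Sim (fst c)" by (simp add: repr_def split: prod.split)

lemma simulation_halts_imp_etm_halts:
  assumes w: "w \<in> lists (alph E)" and halted: "fst ((sim_step^^t) (Start, [], None, w)) = Sim (halt E)"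
  shows "\<exists>k. fst (run E w k) = halt E"
proof (rule ccontr)
  assume not_halts: "\<not> (\<exists>k. fst (run E w k) = halt E)"
  then obtain t' i j where "t \<le> t'" and reached: "(sim_step^^t') (Start, [], None, w) = repr (run E w t) i j"
    using run_simulated[OF w, of t] by blast
  then have "(sim_step^^t') (Start, [], None, w) = (sim_step^^(t' - t)) ((sim_step^^t) (Start, [], None, w))"
    by (metis funpow_add le_add_diff_inverse2 comp_apply)
  then have "fst ((sim_step^^t') (Start, [], None, w)) = Sim (halt E)" using halt_absorbing[OF halted] by simp
  then show False using reached fst_repr not_halts by simp
qed

lemma etm_halts_imp_simulation_halts:
  assumes w: "w \<in> lists (alph E)" and halted: "fst (run E w k) = halt E"
  shows "\<exists>t \<le> time_bound (length w) k. fst ((sim_step^^t) (Start, [], None, w)) = Sim (halt E)"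
proof -
  define k0 where "k0 = (LEAST k. fst (run E w k) = halt E)"
  have k0: "fst (run E w k0) = halt E" "k0 \<le> k" using halted unfolding k0_def by (auto intro: LeastI Least_le)
  have "\<forall>j<k0. fst (run E w j) \<noteq> halt E" unfolding k0_def using not_less_Least by blast
  then obtain t i j where t: "t \<le> time_bound (length w) k0"
    and reached: "(sim_step^^t) (Start, [], None, w) = repr (run E w k0) i j"
    using run_simulated[OF w, of k0] by blast
  show ?thesis using order_trans[OF t time_bound_mono[OF k0(2)]] reached k0(1) fst_repr by (intro exI[of _ t]) auto
qed

subsection \<open>The simulating Turing machine\<close>

definition "sim_alph = alph E \<union> {sep, blank, pad}"
definition "sim_states = {Start, Scan_Input, Open_Head} \<union> Sim ` states E
   \<union> (\<lambda>(q, b). Left_Check q b) ` (states E \<times> sym_bot (alph E))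
   \<union> (\<lambda>(q, b). Left_Wrap q b) ` (states E \<times> sym_bot (alph E))
   \<union> (\<lambda>(q, b). Seek_Left q b) ` (states E \<times> sym_bot (alph E))
   \<union> (\<lambda>(q, b, i). Push q b i) ` (states E \<times> sym_bot (alph E) \<times> {..<msize E})
   \<union> (\<lambda>(q, b, i). Write q b i) ` (states E \<times> sym_bot (alph E) \<times> {..<msize E})
   \<union> Seek_Front ` states E \<union> Fetch ` states E \<union> Return ` states E
   \<union> (\<lambda>(q, c). Carry q c) ` (states E \<times> sym_bot (alph E))"

lemma sim_states_iff:
  "Start \<in> sim_states" "Scan_Input \<in> sim_states" "Open_Head \<in> sim_states"
  "Sim q \<in> sim_states \<longleftrightarrow> q \<in> states E"
  "Left_Check q b \<in> sim_states \<longleftrightarrow> q \<in> states E \<and> b \<in> sym_bot (alph E)"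
  "Left_Wrap q b \<in> sim_states \<longleftrightarrow> q \<in> states E \<and> b \<in> sym_bot (alph E)"
  "Seek_Left q b \<in> sim_states \<longleftrightarrow> q \<in> states E \<and> b \<in> sym_bot (alph E)"
  "Push q b i \<in> sim_states \<longleftrightarrow> q \<in> states E \<and> b \<in> sym_bot (alph E) \<and> i < msize E"
  "Write q b i \<in> sim_states \<longleftrightarrow> q \<in> states E \<and> b \<in> sym_bot (alph E) \<and> i < msize E"
  "Seek_Front q \<in> sim_states \<longleftrightarrow> q \<in> states E"
  "Fetch q \<in> sim_states \<longleftrightarrow> q \<in> states E"
  "Return q \<in> sim_states \<longleftrightarrow> q \<in> states E"
  "Carry q c \<in> sim_states \<longleftrightarrow> q \<in> states E \<and> c \<in> sym_bot (alph E)"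
  unfolding sim_states_def by (auto simp: image_iff)

lemma written_at_in: "q \<in> states E \<Longrightarrow> b \<in> sym_bot (alph E) \<Longrightarrow> written_at q b i \<in> sim_alph"
proof -
  assume a: "q \<in> states E" "b \<in> sym_bot (alph E)"
  have "i < length (written q b) \<Longrightarrow> written q b ! i \<in> alph E"
    using delta_valid[of q b] a nth_mem[of i "written q b"] by auto
  then show ?thesis by (auto simp: written_at_def sim_alph_def)
qed

lemma write_action_closed: assumes "q \<in> states E" "b \<in> sym_bot (alph E)"
  shows "fst (write_action q b i) \<in> sim_states \<and> fst (snd (write_action q b i)) \<in> sim_alph"
proof -
  have "length (written q b) \<le> msize E" using length_written_le assms by simp
  then show ?thesis using delta_valid[of q b] assms written_at_in[OF assms]
    by (auto simp: write_action_def sim_states_iff)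
qed

lemma push_action_closed: assumes "q \<in> states E" "b \<in> sym_bot (alph E)" "i < msize E"
  shows "fst (push_action q b i) \<in> sim_states \<and> fst (snd (push_action q b i)) \<in> sim_alph"
  using delta_valid[of q b] assms written_at_in[OF assms(1,2)]
  by (auto simp: push_action_def sim_states_iff)

lemma decode_sym_in: "x \<in> sim_alph \<Longrightarrow> x \<noteq> sep \<Longrightarrow> x \<noteq> pad \<Longrightarrow> decode_sym x \<in> sym_bot (alph E)"
  by (auto simp: decode_sym_def sim_alph_def sym_bot_def)

lemma finite_sim_states: "finite sim_states" using finite_states finite_sym_bot_alph by (simp add: sim_states_def)
lemma finite_sim_alph: "finite sim_alph" using finite_alph by (simp add: sim_alph_def)

lemma sim_delta_Sim_closed:
  assumes "q \<in> states E" "h \<in> sym_bot sim_alph"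
  shows "fst (sim_delta (Sim q) h) \<in> sim_states \<and> fst (snd (sim_delta (Sim q) h)) \<in> sim_alph"
proof (cases "\<exists>x. h = Some x \<and> x \<noteq> sep \<and> x \<noteq> pad \<and> q \<noteq> halt E")
  case True
  then obtain x where x: "h = Some x" "x \<noteq> sep" "x \<noteq> pad" "q \<noteq> halt E" by blast
  define b where "b = decode_sym x"
  have b: "b \<in> sym_bot (alph E)" using decode_sym_in x assms(2) by (auto simp: b_def sym_bot_def)
  have "move q b = S \<Longrightarrow> hd (written q b) \<in> sim_alph"
    using delta_valid[OF assms(1) b] by (cases "written q b") (auto simp: sim_alph_def)
  then show ?thesis using x write_action_closed[OF assms(1) b, of 0] delta_valid[OF assms(1) b] b assms(1)
    by (auto simp: sim_delta_def b_def[symmetric] sim_states_iff sim_alph_def split: dir.split)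
next
  case False
  then show ?thesis using assms by (auto simp: sim_delta_def sim_states_iff sim_alph_def sym_bot_def)
qed

lemma sim_delta_closed:
  assumes "s \<in> sim_states" "h \<in> sym_bot sim_alph"
  shows "fst (sim_delta s h) \<in> sim_states \<and> fst (snd (sim_delta s h)) \<in> sim_alph"
proof (cases s)
  case (Sim q)
  then show ?thesis using assms sim_delta_Sim_closed by (simp add: sim_states_iff)
next
  case (Seek_Left q b)
  then have q: "q \<in> states E" "b \<in> sym_bot (alph E)" using assms by (auto simp: sim_states_iff)
  have "written q b \<noteq> [] \<Longrightarrow> length (written q b) - 1 < msize E"
    using length_written_le[OF q] by (cases "written q b") auto
  moreover have "h \<noteq> None \<Longrightarrow> the h \<in> sim_alph" using assms by (auto simp: sym_bot_def)
  ultimately show ?thesis using Seek_Left q delta_valid[OF q] push_action_closed[OF q, of "length (written q b) - 1"]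
    by (auto simp: sim_delta_def sim_states_iff sim_alph_def is_pad_def)
next
  case (Push q b i)
  then show ?thesis using assms push_action_closed[of q b i] by (auto simp: sim_delta_def sim_states_iff)
next
  case (Write q b i)
  then show ?thesis using assms write_action_closed[of q b i] by (auto simp: sim_delta_def sim_states_iff)
next
  case (Carry q c)
  then have "encode_sym c \<in> sim_alph" using assms by (auto simp: sim_states_iff encode_sym_def sym_bot_def sim_alph_def)
  then show ?thesis using Carry assms by (auto simp: sim_delta_def sim_states_iff sym_bot_def is_pad_def)
qed (use assms etm in \<open>auto simp: sim_delta_def sim_states_iff sym_bot_def sim_alph_def is_pad_def is_etm_def
  split: option.split\<close>)

text \<open>The states of the simulating machine are numbered by the injection \<open>to_nat\<close>; off the
  image of \<open>sim_states\<close> its transition function is junk that never matters.\<close>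
definition "sim_tm = \<lparr>states = to_nat ` sim_states, init = to_nat Start, halt = to_nat (Sim (halt E)),
  alph = sim_alph, delta = (\<lambda>q h. case sim_delta (from_nat q) h of (s, a, d) \<Rightarrow> (to_nat s, [a], d))\<rparr>"

definition to_config :: "sim_state tconfig \<Rightarrow> config" where
  "to_config c = (case c of (s, r) \<Rightarrow> (to_nat s, r))"

lemma delta_sim_tm:
  "delta sim_tm (to_nat s) h = (to_nat (fst (sim_delta s h)), [fst (snd (sim_delta s h))], snd (snd (sim_delta s h)))"
  by (simp add: sim_tm_def split: prod.split)

lemma step_sim_tm: "step sim_tm (to_config c) = to_config (sim_step c)"
proof -
  obtain s A h R' where c: "c = (s, A, h, R')" by (cases c) auto
  obtain s' a d where "sim_delta s h = (s', a, d)" by (cases "sim_delta s h") auto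
  then show ?thesis
    by (cases d) (auto simp: c step_def sim_tm_def tm_step_def to_config_def last_opt_def hd_opt_def split: list.split)
qed

lemma run_sim_tm: "run sim_tm w n = to_config ((sim_step^^n) (Start, [], None, w))"
proof (induction n)
  case 0 then show ?case by (simp add: run_def sim_tm_def to_config_def)
next
  case (Suc n) then show ?case by (simp add: run_def step_sim_tm[symmetric])
qed

lemma halt_sim_tm:
  "fst (run sim_tm w n) = halt sim_tm \<longleftrightarrow> fst ((sim_step^^n) (Start, [], None, w)) = Sim (halt E)"
proof -
  have "fst (run sim_tm w n) = to_nat (fst ((sim_step^^n) (Start, [], None, w)))"
    unfolding run_sim_tm by (simp add: to_config_def split: prod.split)
  moreover have "halt sim_tm = to_nat (Sim (halt E))" by (simp add: sim_tm_def)
  ultimately show ?thesis by simp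
qed

lemma halts_sim_tm: "w \<in> lists (alph E) \<Longrightarrow> halts sim_tm w \<longleftrightarrow> halts E w"
  unfolding halts_def halt_sim_tm using simulation_halts_imp_etm_halts etm_halts_imp_simulation_halts by blast

lemma simulates_sim_tm: "simulates sim_tm E"
  unfolding simulates_def
proof (intro conjI allI impI ballI)
  show "alph E \<subseteq> alph sim_tm" by (auto simp: sim_tm_def sim_alph_def)
next
  fix w assume "w \<in> lists (alph E)" then show "halts sim_tm w = halts E w" by (rule halts_sim_tm)
next
  fix p :: "nat poly"
  assume E_poly: "\<forall>w\<in>lists (alph E). halts E w \<longrightarrow> halts_within E w (poly p (length w))"
  define p' where "p' = [:3, 1:] + p * (smult 2 ([:1, 1:] + smult (msize E + 2) p) + [:3 * msize E + 12:])"
  have "halts_within sim_tm w (poly p' (length w))" if w: "w \<in> lists (alph E)" and "halts sim_tm w" for w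
  proof -
    obtain k where "k \<le> poly p (length w)" "fst (run E w k) = halt E"
      using E_poly w halts_sim_tm[OF w] \<open>halts sim_tm w\<close> unfolding halts_within_def by blast
    then obtain t where t: "t \<le> time_bound (length w) (poly p (length w))"
      "fst ((sim_step^^t) (Start, [], None, w)) = Sim (halt E)"
      using etm_halts_imp_simulation_halts[OF w] time_bound_mono order_trans by metis
    have "time_bound (length w) (poly p (length w)) = poly p' (length w)"
      by (simp add: time_bound_def p'_def algebra_simps)
    then show ?thesis unfolding halts_within_def using t halt_sim_tm by metis
  qed
  then show "\<exists>p'. \<forall>w\<in>lists (alph E). halts sim_tm w \<longrightarrow> halts_within sim_tm w (poly p' (length w))"
    by blast
qed

lemma is_tm_sim_tm: "is_tm sim_tm"
proof -
  have "\<forall>q\<in>states sim_tm. \<forall>b\<in>sym_bot (alph sim_tm). case delta sim_tm q b of (q', \<beta>, d) \<Rightarrow>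
          q' \<in> states sim_tm \<and> set \<beta> \<subseteq> alph sim_tm \<and> (d = S \<longrightarrow> length \<beta> = 1)"
  proof (intro ballI)
    fix q b assume q: "q \<in> states sim_tm" and b: "b \<in> sym_bot (alph sim_tm)"
    obtain s where s: "q = to_nat s" "s \<in> sim_states" using q by (auto simp: sim_tm_def)
    show "case delta sim_tm q b of (q', \<beta>, d) \<Rightarrow> q' \<in> states sim_tm \<and> set \<beta> \<subseteq> alph sim_tm \<and> (d = S \<longrightarrow> length \<beta> = 1)"
      using sim_delta_closed[OF s(2)] b unfolding s(1) delta_sim_tm by (simp add: sim_tm_def)
  qed
  moreover have "halt E \<in> states E" using etm by (simp add: is_etm_def)
  moreover have "\<exists>a\<in>alph sim_tm. delta sim_tm (halt sim_tm) None = (halt sim_tm, [a], S)"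
    by (rule bexI[of _ blank]) (simp_all add: sim_tm_def sim_delta_def sim_alph_def)
  ultimately show ?thesis using finite_sim_states finite_sim_alph unfolding is_tm_def is_etm_def
    by (simp add: sim_tm_def sim_states_iff sim_delta_def split: prod.split)
qed

lemma card_sim_states_le: "card sim_states \<le> 13 * (msize E + 4) ^ 3"
proof -
  define A where "A = msize E + 4"
  define Q where "Q = card (states E)"
  define B where "B = card (sym_bot (alph E))"
  have bounds: "Q \<le> A" "B \<le> A" "msize E \<le> A" "1 \<le> A"
    using finite_alph by (simp_all add: A_def Q_def B_def card_sym_bot msize_def)
  have cube: "x * (y * z) \<le> A ^ 3" if "x \<le> A" "y \<le> A" "z \<le> A" for x y z
  proof -
    have "x * (y * z) \<le> A * (A * A)" using that by (intro mult_le_mono)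
    then show ?thesis by (simp add: power3_eq_cube)
  qed
  have "card sim_states \<le> 3 + Q + Q * B + Q * B + Q * B + Q * (B * msize E) + Q * (B * msize E) + Q + Q + Q + Q * B"
    unfolding sim_states_def Q_def B_def
    by (intro card_Un_bounded) (use finite_states finite_sym_bot_alph in
      \<open>auto intro!: card_image_bounded simp: card_cartesian_product card_insert_if\<close>)
  then show ?thesis
    using cube[OF bounds(1,2,3)] cube[OF bounds(1,2,4)] cube[OF bounds(1,4,4)] cube[OF bounds(4,4,4)]
    unfolding A_def by linarith
qed

lemma msize_sim_tm_le: "msize sim_tm \<le> 27 * (msize E + 4) ^ 4"
proof -
  define A where "A = msize E + 4"
  have "card sim_alph \<le> card (alph E) + card {sep, blank, pad}"
    unfolding sim_alph_def by (rule card_Un_le)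
  moreover have "card {sep, blank, pad} \<le> 3" by (simp add: card_insert_if)
  moreover have "card (alph E) \<le> msize E" by (simp add: msize_def)
  ultimately have alph: "Suc (card sim_alph) \<le> A" by (simp add: A_def)
  have states: "card (states sim_tm) \<le> 13 * A ^ 3"
    using card_sim_states_le by (simp add: sim_tm_def card_image A_def)
  have "msize sim_tm = card (states sim_tm) + card sim_alph + card (states sim_tm) * Suc (card sim_alph)"
    using finite_sim_alph by (subst msize_single_writes) (simp_all add: sim_tm_def split: prod.split)
  also have "\<dots> \<le> 13 * A ^ 3 + A + 13 * A ^ 3 * A"
    using states alph by (intro add_mono mult_le_mono) auto
  also have "\<dots> \<le> 27 * A ^ 4"
  proof -
    have "A ^ 3 \<le> A ^ 4" "A \<le> A ^ 4" by (simp_all add: A_def power_increasing self_le_power)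
    moreover have "A ^ 3 * A = A ^ 4" by (simp add: power_Suc2[symmetric] del: power_Suc)
    ultimately show ?thesis by linarith
  qed
  finally show ?thesis by (simp add: A_def)
qed

end

lemma simulates_refl: "simulates M M"
  by (auto simp: simulates_def)

lemma etm_simulated_by_tm:
  assumes "is_etm E"
  shows "\<exists>T. is_tm T \<and> msize T \<le> 27 * (msize E + 4) ^ 4 \<and> simulates T E"
proof -
  interpret etm_simulation E by (rule etm_simulation.intro[OF assms])
  show ?thesis using is_tm_sim_tm msize_sim_tm_le simulates_sim_tm by blast
qed

theorem mainTheorem4:
  shows "(\<exists>p :: nat poly. \<forall>T. is_tm T \<longrightarrow>
            (\<exists>E. is_etm E \<and> msize E \<le> poly p (msize T) \<and> simulates E T))
       \<and> (\<exists>p :: nat poly. \<forall>E. is_etm E \<longrightarrow>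
            (\<exists>T. is_tm T \<and> msize T \<le> poly p (msize E) \<and> simulates T E))"
proof
  show "\<exists>p :: nat poly. \<forall>T. is_tm T \<longrightarrow> (\<exists>E. is_etm E \<and> msize E \<le> poly p (msize T) \<and> simulates E T)"
    using simulates_refl by (intro exI[of _ "[:0, 1:]"]) (auto simp: is_tm_def)
  show "\<exists>p :: nat poly. \<forall>E. is_etm E \<longrightarrow> (\<exists>T. is_tm T \<and> msize T \<le> poly p (msize E) \<and> simulates T E)"
    using etm_simulated_by_tm by (intro exI[of _ "smult 27 ([:4, 1:] ^ 4)"]) (simp add: poly_power add.commute)
qed

end
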